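(* Let $K,D,U$ be integers with $0\le U\le D$ and $U+D\le K-2$, and let $\mathbb{F}_q$ be any finite field. Consider the two-sided single unicast index coding problem with $K$ messages and $K$ receivers, where $R_k$ wants $x_k$ and has side-information $\{x_{k-U},\dots,x_{k-1}\}\cup\{x_{k+1},\dots,x_{k+D}\}$ (indices modulo $K$). Let $a=\gcd(K,D-U,U+1)$, $u_a=\frac{U+1}{a}$, $\Delta_a=\frac{D-U}{a}$, $K_a=\frac{K}{a}$, and let each message be $x_k=(x_{k,1},\dots,x_{k,u_a})\in\mathbb{F}_q^{u_a}$. Let $\mathbf{L}$ be the AIR matrix of size $K_a\times(K_a-\Delta_a)$ with rows $L_0,\dots,L_{K_a-1}$ (row indices taken modulo $K_a$). For $s\in[0:K_a-1]$ let $\mathbf{V}_s$ be the $u_a\times(K_a-\Delta_a)$ matrix with rows $L_s,L_{s+1},\dots,L_{s+u_a-1}$, let $\tilde{\mathbf{V}}_s$ be the $(au_a)\times(K_a-\Delta_a)$ matrix consisting of $a$ copies of $\mathbf{V}_s$ stacked vertically, and let $\mathbf{L}^{(2s)}$ be the $Ku_a\times(K_a-\Delta_a)$ matrix obtained by stacking $\tilde{\mathbf{V}}_0,\tilde{\mathbf{V}}_1,\dots,\tilde{\mathbf{V}}_{K_a-1}$ vertically. Then $\mathbf{L}^{(2s)}$ is an encoding matrix of an optimal length $u_a$-dimensional vector linear index code for this problem: with $\mathbf{x}=[x_{0,1}\,\cdots\,x_{0,u_a}\;x_{1,1}\,\cdots\,x_{1,u_a}\;\cdots\;x_{K-1,1}\,\cdots\,x_{K-1,u_a}]$,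 the broadcast symbols $[c_0\,\cdots\,c_{K_a-\Delta_a-1}]=\mathbf{x}\mathbf{L}^{(2s)}$ allow every receiver $R_k$ to decode $x_k$ from them and its side-information, and the code has rate $\frac{U+1}{K-D+U}$, equal to the symmetric capacity.
   Context: Index coding: a $p$-dimensional vector linear index code of length $N$ maps the messages $x_k\in\mathbb{F}_q^p$ linearly to $N$ broadcast symbols; receiver $R_k$ must recover $x_k$ from the broadcast symbols and its side-information; rate is $p/N$. For this problem (with $U+D\le K-2$) the symmetric capacity is $\frac{U+1}{K-D+U}$, and optimal length means rate equal to capacity. AIR matrix: for integers $m\ge n\ge1$, the binary $m\times n$ matrix built by: letting $\mathbf{I}_{c\times d}$ ($d\mid c$) be $c/d$ copies of $\mathbf{I}_d$ stacked vertically; starting with an empty $m\times n$ matrix whose unfilled part is everything; Step 1: $m=qn+r$, $0\le r<n$, fill the first $qn$ rows of the unfilled part with $\mathbf{I}_{qn\times n}$, unfilled part becomes the last $r$ rows, stop if $r=0$; Step 2: $n=q'r+r'$, $0\le r'<r$, fill the first $q'r$ columns of the unfilled part with $q'$ copies of $\mathbf{I}_r$ placed side by side, unfilled part becomes its last $r'$ columns, stop if $r'=0$, else set $m\leftarrow r$, $n\leftarrow r'$ and go to Step 1. *)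

theory Defs
  imports Complex_Main
begin

text \<open>AIR matrix of size m x n: air m n i j holds iff entry (i,j) (0-based) equals 1.
  Follows the recursive construction (Step 1 / Step 2) verbatim.\<close>
function air :: "nat \<Rightarrow> nat \<Rightarrow> nat \<Rightarrow> nat \<Rightarrow> bool" where
  "air m n i j =
     (if n = 0 \<or> m \<le> i \<or> n \<le> j then False
      else if i < (m div n) * n then i mod n = j
      else (let r = m mod n; i' = i - (m div n) * n in
            if r = 0 then False
            else if j < (n div r) * r then i' = j mod r
            else air r (n mod r) i' (j - (n div r) * r)))"
  by pat_completeness auto
termination
  by (relation "measure (\<lambda>(m, n, i, j). n)") (auto simp: Let_def intro: order.strict_trans[OF mod_less_divisor mod_less_divisor])

definition ic_a :: "nat \<Rightarrow> nat \<Rightarrow> nat \<Rightarrow> nat" where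
  "ic_a K D U = gcd K (gcd (D - U) (U + 1))"
definition ic_ua :: "nat \<Rightarrow> nat \<Rightarrow> nat \<Rightarrow> nat" where
  "ic_ua K D U = (U + 1) div ic_a K D U"
definition ic_Da :: "nat \<Rightarrow> nat \<Rightarrow> nat \<Rightarrow> nat" where
  "ic_Da K D U = (D - U) div ic_a K D U"
definition ic_Ka :: "nat \<Rightarrow> nat \<Rightarrow> nat \<Rightarrow> nat" where
  "ic_Ka K D U = K div ic_a K D U"
definition ic_N :: "nat \<Rightarrow> nat \<Rightarrow> nat \<Rightarrow> nat" where
  "ic_N K D U = ic_Ka K D U - ic_Da K D U"

text \<open>Entry (r,j) of L^(2s): block b = r div (a*ua) is tilde V_b; within it, row t = r mod (a*ua)
  is row (t mod ua) of V_b, i.e. row L_{(b + t mod ua) mod K_a} of the AIR matrix.\<close>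
definition L2s :: "nat \<Rightarrow> nat \<Rightarrow> nat \<Rightarrow> nat \<Rightarrow> nat \<Rightarrow> bool" where
  "L2s K D U r j =
     (let a = ic_a K D U; ua = ic_ua K D U; Ka = ic_Ka K D U in
      air Ka (ic_N K D U) ((r div (a * ua) + (r mod (a * ua)) mod ua) mod Ka) j)"

text \<open>Broadcast symbol c_j = x L^(2s) column j; message x k has components x k i, i < ua;
  position of x_{k,i+1} in the row vector is k*ua + i.\<close>
definition codeword :: "nat \<Rightarrow> nat \<Rightarrow> nat \<Rightarrow> (nat \<Rightarrow> nat \<Rightarrow> 'a::field) \<Rightarrow> nat \<Rightarrow> 'a" where
  "codeword K D U x j =
     (\<Sum>r<K * ic_ua K D U. x (r div ic_ua K D U) (r mod ic_ua K D U) * of_bool (L2s K D U r j))"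

definition side_info :: "nat \<Rightarrow> nat \<Rightarrow> nat \<Rightarrow> nat \<Rightarrow> nat set" where
  "side_info K D U k = {(k + K - t) mod K | t. 1 \<le> t \<and> t \<le> U} \<union> {(k + t) mod K | t. 1 \<le> t \<and> t \<le> D}"

end

theory Submission
  imports Defs
begin

text \<open>Row k u_a + i' of L^(2s), the coefficient row of x_{k,i'+1}, is row (k div a + i') mod K_a
  of the AIR matrix. Any n cyclically consecutive rows of an m x n AIR matrix are linearly
  independent; this is proved by induction along the Euclidean recursion of its construction,
  together with the full rank of its square bottom right corners, which contain the recursive block.
  Receiver R_k uses the window of N = K_a - Delta_a consecutive rows starting at
  k div a + u_a + Delta_a: every message symbol outside its side information has its row in this
  window, and x_{k,i+1} is the only one at position N - u_a + i. The combination of the broadcast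
  symbols dual to that position therefore yields x_{k,i+1} up to known terms. The rate follows
  from a N = K - D + U and a u_a = U + 1.\<close>

section \<open>Full row rank of submatrices\<close>

definition full_row_rank :: "(nat \<Rightarrow> nat \<Rightarrow> 'a::field) \<Rightarrow> nat set \<Rightarrow> nat set \<Rightarrow> bool" where
  "full_row_rank M T C \<longleftrightarrow> (\<forall>v. \<exists>w. \<forall>t\<in>T. (\<Sum>c\<in>C. M t c * w c) = v t)"

lemma full_row_rank_empty: "full_row_rank M {} C"
  by (simp add: full_row_rank_def)

lemma full_row_rank_unit_rows:
  assumes fin: "finite C" and inj: "inj_on \<phi> Tu" and sub: "\<phi> ` Tu \<subseteq> C"
    and unit: "\<And>t c. t \<in> Tu \<Longrightarrow> c \<in> C \<Longrightarrow> M t c = of_bool (c = \<phi> t)"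
    and rest: "full_row_rank M Tr (C - \<phi> ` Tu)"
  shows "full_row_rank M (Tu \<union> Tr) C"
  unfolding full_row_rank_def
proof
  fix v :: "nat \<Rightarrow> 'a"
  define F where "F = \<phi> ` Tu"
  define pre where "pre c = v (inv_into Tu \<phi> c)" for c
  obtain w' where w': "\<And>t. t \<in> Tr \<Longrightarrow> (\<Sum>c\<in>C - F. M t c * w' c) = v t - (\<Sum>c\<in>F. M t c * pre c)"
    using spec[OF rest[unfolded full_row_rank_def], of "\<lambda>t. v t - (\<Sum>c\<in>F. M t c * pre c)"]
    unfolding F_def by blast
  define w where "w c = (if c \<in> F then pre c else w' c)" for c
  have split: "(\<Sum>c\<in>C. M t c * w c) = (\<Sum>c\<in>F. M t c * pre c) + (\<Sum>c\<in>C - F. M t c * w' c)" for t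
  proof -
    have "(\<Sum>c\<in>C. M t c * w c) = (\<Sum>c\<in>F. M t c * w c) + (\<Sum>c\<in>C - F. M t c * w c)"
      using sum.subset_diff[OF _ fin, of F] sub by (simp add: F_def add.commute)
    then show ?thesis by (simp add: w_def)
  qed
  show "\<exists>w. \<forall>t\<in>Tu \<union> Tr. (\<Sum>c\<in>C. M t c * w c) = v t"
  proof (intro exI ballI)
    fix t assume t: "t \<in> Tu \<union> Tr"
    show "(\<Sum>c\<in>C. M t c * w c) = v t"
    proof (cases "t \<in> Tu")
      case True
      have "(\<Sum>c\<in>C. M t c * w c) = (\<Sum>c\<in>C. if c = \<phi> t then w c else 0)"
        by (rule sum.cong) (auto simp: unit True)
      also have "\<dots> = w (\<phi> t)" using sub True fin by auto
      also have "\<dots> = v t" using True inj by (auto simp: w_def F_def pre_def)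
      finally show ?thesis .
    next
      case False
      then show ?thesis using t split w' by simp
    qed
  qed
qed

lemma full_row_rank_unit_cols:
  assumes fin: "finite C" and sub: "Cu \<subseteq> C" and inj: "inj_on \<psi> Cu" and img: "\<psi> ` Cu \<subseteq> T"
    and unit: "\<And>t c. t \<in> T \<Longrightarrow> c \<in> Cu \<Longrightarrow> M t c = of_bool (t = \<psi> c)"
    and rest: "full_row_rank M (T - \<psi> ` Cu) (C - Cu)"
  shows "full_row_rank M T C"
  unfolding full_row_rank_def
proof
  fix v :: "nat \<Rightarrow> 'a"
  obtain w' where w': "\<And>t. t \<in> T - \<psi> ` Cu \<Longrightarrow> (\<Sum>c\<in>C - Cu. M t c * w' c) = v t"
    using spec[OF rest[unfolded full_row_rank_def], of v] by blast
  define w where "w c = (if c \<in> Cu then v (\<psi> c) - (\<Sum>c'\<in>C - Cu. M (\<psi> c) c' * w' c') else w' c)" for c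
  have finu: "finite Cu" using fin sub finite_subset by blast
  show "\<exists>w. \<forall>t\<in>T. (\<Sum>c\<in>C. M t c * w c) = v t"
  proof (intro exI ballI)
    fix t assume t: "t \<in> T"
    have split: "(\<Sum>c\<in>C. M t c * w c) = (\<Sum>c\<in>Cu. M t c * w c) + (\<Sum>c\<in>C - Cu. M t c * w' c)"
      using sum.subset_diff[OF sub fin, of "\<lambda>c. M t c * w c"] by (simp add: w_def add.commute)
    show "(\<Sum>c\<in>C. M t c * w c) = v t"
    proof (cases "t \<in> \<psi> ` Cu")
      case True
      then obtain c0 where c0: "c0 \<in> Cu" "t = \<psi> c0" by blast
      have "(\<Sum>c\<in>Cu. M t c * w c) = (\<Sum>c\<in>Cu. if c = c0 then w c else 0)"
        by (rule sum.cong) (use c0 inj t unit in \<open>auto simp: inj_on_def\<close>)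
      also have "\<dots> = w c0" using c0 finu by simp
      finally show ?thesis using split c0 by (simp add: w_def)
    next
      case False
      have "(\<Sum>c\<in>Cu. M t c * w c) = 0"
        by (rule sum.neutral) (use False t unit in auto)
      then show ?thesis using split w'[of t] t False by simp
    qed
  qed
qed

lemma full_row_rank_reindex:
  assumes M: "full_row_rank M T C"
    and inj: "inj_on f T'" and img: "f ` T' \<subseteq> T" and bij: "bij_betw g C' C"
    and eq: "\<And>i j. i \<in> T' \<Longrightarrow> j \<in> C' \<Longrightarrow> M' i j = M (f i) (g j)"
  shows "full_row_rank M' T' C'"
  unfolding full_row_rank_def
proof
  fix v :: "nat \<Rightarrow> 'a"
  obtain w where w: "\<And>t. t \<in> T \<Longrightarrow> (\<Sum>c\<in>C. M t c * w c) = v (inv_into T' f t)"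
    using spec[OF M[unfolded full_row_rank_def], of "\<lambda>t. v (inv_into T' f t)"] by blast
  show "\<exists>w. \<forall>i\<in>T'. (\<Sum>j\<in>C'. M' i j * w j) = v i"
  proof (intro exI ballI)
    fix i assume i: "i \<in> T'"
    have "(\<Sum>j\<in>C'. M' i j * w (g j)) = (\<Sum>j\<in>C'. M (f i) (g j) * w (g j))"
      by (rule sum.cong) (auto simp: eq i)
    also have "\<dots> = (\<Sum>c\<in>C. M (f i) c * w c)"
      using sum.reindex_bij_betw[OF bij, of "\<lambda>c. M (f i) c * w c"] by simp
    also have "\<dots> = v i" using w[of "f i"] i img inj by auto
    finally show "(\<Sum>j\<in>C'. M' i j * w (g j)) = v i" .
  qed
qed

lemma full_row_rank_permutation:
  assumes "finite C" and "bij_betw \<phi> T C"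
    and "\<And>t c. t \<in> T \<Longrightarrow> c \<in> C \<Longrightarrow> M t c = of_bool (c = \<phi> t)"
  shows "full_row_rank M T C"
  using full_row_rank_unit_rows[where Tr = "{}", OF assms(1) _ _ assms(3)] assms(2)
  by (simp add: bij_betw_def full_row_rank_empty)

lemma full_row_rank_permutation_cols:
  assumes "finite C" and "bij_betw \<psi> C T"
    and "\<And>t c. t \<in> T \<Longrightarrow> c \<in> C \<Longrightarrow> M t c = of_bool (t = \<psi> c)"
  shows "full_row_rank M T C"
  using full_row_rank_unit_cols[OF assms(1) order.refl _ _ assms(3)] assms(2)
  by (simp add: bij_betw_def full_row_rank_empty)

section \<open>Cyclic windows of the AIR matrix\<close>

lemma mod_eq_diff_mult: "(Q::nat) * r \<le> c \<Longrightarrow> c < Q * r + r \<Longrightarrow> c mod r = c - Q * r"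
  by (metis add_diff_inverse_nat add_less_cancel_left mod_less mod_mult_self3 not_less)

lemma bij_betw_mod_interval:
  assumes "0 < (r::nat)"
  shows "bij_betw (\<lambda>c. c mod r) {\<beta>..<\<beta> + r} {..<r}"
proof -
  have inj: "inj_on (\<lambda>c. c mod r) {\<beta>..<\<beta> + r}"
  proof (rule inj_onI)
    fix x y assume x: "x \<in> {\<beta>..<\<beta> + r}" and y: "y \<in> {\<beta>..<\<beta> + r}" and eq: "x mod r = y mod r"
    have "r dvd (max x y - min x y)"
      using eq by (cases "x \<le> y") (simp_all add: max_def min_def mod_eq_dvd_iff_nat[symmetric])
    moreover have "max x y - min x y < r" using x y by auto
    ultimately show "x = y" by (metis dvd_imp_le le_antisym max_def min_def not_le zero_less_diff)
  qed
  have "(\<lambda>c. c mod r) ` {\<beta>..<\<beta> + r} \<subseteq> {..<r}" using assms by auto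
  moreover have "card ((\<lambda>c. c mod r) ` {\<beta>..<\<beta> + r}) = card {..<r}"
    using card_image[OF inj] by simp
  ultimately have "(\<lambda>c. c mod r) ` {\<beta>..<\<beta> + r} = {..<r}"
    by (simp add: card_subset_eq)
  with inj show ?thesis by (simp add: bij_betw_def)
qed

lemma bij_betw_cyclic_shift:
  assumes "0 < (n::nat)"
  shows "bij_betw (\<lambda>t. (p + t) mod n) {..<n} {..<n}"
proof -
  have "bij_betw (\<lambda>t. t + p) {..<n} {p..<p + n}"
    by (simp add: bij_betw_def lessThan_atLeast0 add.commute)
  from bij_betw_trans[OF this bij_betw_mod_interval[OF assms]] show ?thesis
    by (simp add: o_def add.commute)
qed

lemma bij_betw_diff_const: "(k::nat) \<le> a \<Longrightarrow> bij_betw (\<lambda>t. t - k) {a..<b} {a - k..<b - k}"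
  unfolding bij_betw_def inj_on_def by (auto simp: image_minus_const_atLeastLessThan_nat)

declare air.simps [simp del]

definition air_window :: "nat \<Rightarrow> nat \<Rightarrow> nat \<Rightarrow> nat \<Rightarrow> nat \<Rightarrow> 'a::field" where
  "air_window m n p t j = of_bool (air m n ((p + t) mod m) j)"

definition air_corner :: "nat \<Rightarrow> nat \<Rightarrow> nat \<Rightarrow> nat \<Rightarrow> nat \<Rightarrow> 'a::field" where
  "air_corner m n \<epsilon> t j = of_bool (air m n (m - \<epsilon> + t) (n - \<epsilon> + j))"

lemma air_window_mod: "air_window m n (p mod m) = air_window m n p"
  by (simp add: air_window_def mod_add_left_eq fun_eq_iff)

lemma air_identity_part:
  assumes "0 < n" "i < m div n * n" "j < n"
  shows "air m n i j = (i mod n = j)"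
proof -
  have "i < m" using assms(2) div_mult_mod_eq[of m n] by linarith
  with assms show ?thesis by (subst air.simps) auto
qed

lemma air_remainder_part:
  assumes "0 < n" "i < m mod n" "j < n"
  shows "air m n (m div n * n + i) j =
    (if j < n div (m mod n) * (m mod n) then i = j mod (m mod n)
     else air (m mod n) (n mod (m mod n)) i (j - n div (m mod n) * (m mod n)))"
proof -
  have "m div n * n + i < m" using assms(2) div_mult_mod_eq[of m n] by linarith
  with assms show ?thesis by (subst air.simps) (auto simp: Let_def)
qed

lemma air_window_full_rank_dvd:
  assumes "0 < n" "n \<le> m" "m mod n = 0"
  shows "full_row_rank (air_window m n p) {..<n} {..<n}"
proof (rule full_row_rank_permutation[OF _ bij_betw_cyclic_shift[OF assms(1)]])
  fix t c assume "t \<in> {..<n}" "c \<in> {..<n}"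
  moreover have "m div n * n = m" using assms(3) by (metis div_mult_mod_eq add.right_neutral)
  moreover have "(p + t) mod m < m" using assms by auto
  moreover have "(p + t) mod m mod n = (p + t) mod n"
    using assms(3) by (simp add: mod_mod_cancel mod_0_imp_dvd)
  ultimately show "air_window m n p t c = of_bool (c = (p + t) mod n)"
    using assms air_identity_part[of n "(p + t) mod m" m c] by (auto simp: air_window_def)
qed simp

lemma air_corner_full_rank_dvd:
  assumes "0 < n" "n \<le> m" "m mod n = 0" "\<epsilon> \<le> n"
  shows "full_row_rank (air_corner m n \<epsilon>) {..<\<epsilon>} {..<\<epsilon>}"
proof (rule full_row_rank_permutation[where \<phi> = id])
  fix t c assume t: "t \<in> {..<\<epsilon>}" and c: "c \<in> {..<\<epsilon>}"
  obtain k where k: "m = n * k" using assms(3) by blast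
  then have "1 \<le> k" using assms by (cases k) auto
  with k assms t have "m - \<epsilon> + t = (n - \<epsilon> + t) + n * (k - 1)"
    by (cases k) (auto simp: algebra_simps)
  then have "(m - \<epsilon> + t) mod n = (n - \<epsilon> + t) mod n" by (simp only: mod_mult_self2)
  also have "\<dots> = n - \<epsilon> + t" using t assms by simp
  finally have "(m - \<epsilon> + t) mod n = n - \<epsilon> + t" .
  moreover have "m div n * n = m" using k assms by simp
  ultimately show "air_corner m n \<epsilon> t c = of_bool (c = id t)"
    using air_identity_part[of n "m - \<epsilon> + t" m "n - \<epsilon> + c"] assms t c by (auto simp: air_corner_def)
qed (auto simp: bij_betw_def)

locale air_step =
  fixes m n :: nat
  assumes n_pos: "0 < n" and n_le_m: "n \<le> m" and rem_pos: "0 < m mod n"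
begin

abbreviation q where "q \<equiv> m div n"
abbreviation r where "r \<equiv> m mod n"
abbreviation q' where "q' \<equiv> n div r"
abbreviation r' where "r' \<equiv> n mod r"

lemma m_eq: "m = q * n + r"
  by simp

lemma r_less_n: "r < n"
  using n_pos by simp

lemma q_pos: "0 < q"
  using n_le_m n_pos by (simp add: div_greater_zero_iff)

lemma n_eq: "n = q' * r + r'"
  by (rule div_mult_mod_eq[symmetric])

lemma r'_less_r: "r' < r"
  using rem_pos by simp

lemma q'_pos: "0 < q'"
  using r_less_n rem_pos by (simp add: div_greater_zero_iff)

lemma r_le_q'r: "r \<le> q' * r"
  using q'_pos by simp

lemma identity_part: "i < q * n \<Longrightarrow> j < n \<Longrightarrow> air m n i j = (i mod n = j)"
  using air_identity_part n_pos by blast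

lemma remainder_part:
  "i < r \<Longrightarrow> j < n \<Longrightarrow>
    air m n (q * n + i) j = (if j < q' * r then i = j mod r else air r r' i (j - q' * r))"
  using air_remainder_part n_pos by blast

lemma recursive_block_top_rows:
  assumes t: "t < r'" and c: "q' * r \<le> c" "c < n"
  shows "air m n (q * n + t) c = (c = t + q' * r)"
proof -
  have "1 \<le> r div r'" using t r'_less_r by (simp add: div_greater_zero_iff Suc_le_eq)
  then have "r' \<le> r div r' * r'" using mult_le_mono1[of 1 "r div r'" r'] by simp
  then have "t < r div r' * r'" using t by linarith
  moreover have "c - q' * r < r'" using c n_eq by linarith
  ultimately have "air r r' t (c - q' * r) = (t mod r' = c - q' * r)"
    using air_identity_part[of r' t r "c - q' * r"] t by simp
  moreover have "air m n (q * n + t) c = air r r' t (c - q' * r)"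
    using remainder_part[of t c] t c r'_less_r by auto
  ultimately show ?thesis using t c by auto
qed

lemma remainder_column_window:
  assumes \<beta>: "\<beta> + r \<le> n"
  shows "full_row_rank (\<lambda>i j. of_bool (air m n (q * n + i) j)) {..<r} {\<beta>..<\<beta> + r}"
proof (cases "\<beta> + r \<le> q' * r")
  case True
  show ?thesis
  proof (rule full_row_rank_permutation_cols[OF _ bij_betw_mod_interval[OF rem_pos]])
    fix t c assume "t \<in> {..<r}" "c \<in> {\<beta>..<\<beta> + r}"
    then show "of_bool (air m n (q * n + t) c) = of_bool (t = c mod r)"
      using remainder_part[of t c] True \<beta> by auto
  qed simp
next
  case False
  \<comment> \<open>the window straddles the last identity block and the recursive block\<close>
  obtain Q where Q: "q' = Q + 1" using q'_pos by (metis Suc_eq_plus1 gr0_implies_Suc)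
  define \<gamma> where "\<gamma> = q' * r - \<beta>"
  have b1: "\<beta> < q' * r" using \<beta> n_eq r'_less_r by linarith
  have b2: "Q * r < \<beta>" using False Q by (simp add: algebra_simps)
  have \<gamma>: "r - \<gamma> \<le> r'" using \<beta> n_eq b1 by (simp add: \<gamma>_def)
  have img: "(\<lambda>i. i + q' * r) ` {..<r - \<gamma>} = {q' * r..<\<beta> + r}"
    using b1 False by (simp add: \<gamma>_def lessThan_atLeast0 add.commute)
  have "full_row_rank (\<lambda>i j. of_bool (air m n (q * n + i) j)) ({..<r - \<gamma>} \<union> {r - \<gamma>..<r}) {\<beta>..<\<beta> + r}"
  proof (rule full_row_rank_unit_rows[where \<phi> = "\<lambda>i. i + q' * r"])
    show "(\<lambda>i. i + q' * r) ` {..<r - \<gamma>} \<subseteq> {\<beta>..<\<beta> + r}" using img b1 by auto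
  next
    fix t c assume t: "t \<in> {..<r - \<gamma>}" and c: "c \<in> {\<beta>..<\<beta> + r}"
    show "of_bool (air m n (q * n + t) c) = of_bool (c = t + q' * r)"
    proof (cases "c < q' * r")
      case True
      have "c mod r = c - Q * r" using mod_eq_diff_mult[of Q r c] True b2 c Q by (simp add: algebra_simps)
      then have "r - \<gamma> \<le> c mod r" using c Q b1 b2 by (simp add: \<gamma>_def algebra_simps, linarith)
      then show ?thesis using remainder_part[of t c] True t c \<beta> by auto
    next
      case False
      then show ?thesis using recursive_block_top_rows[of t c] t c \<gamma> \<beta> by auto
    qed
  next
    have "full_row_rank (\<lambda>i j. of_bool (air m n (q * n + i) j)) {r - \<gamma>..<r} {\<beta>..<q' * r}"
    proof (rule full_row_rank_permutation_cols[where \<psi> = "\<lambda>c. c - Q * r"])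
      have "\<beta> - Q * r = r - \<gamma>" "q' * r - Q * r = r" using Q b1 b2 by (auto simp: \<gamma>_def algebra_simps)
      then show "bij_betw (\<lambda>c. c - Q * r) {\<beta>..<q' * r} {r - \<gamma>..<r}"
        using bij_betw_diff_const[of "Q * r" \<beta> "q' * r"] b2 by simp
    next
      fix t c assume t: "t \<in> {r - \<gamma>..<r}" and c: "c \<in> {\<beta>..<q' * r}"
      have "c mod r = c - Q * r" using mod_eq_diff_mult[of Q r c] c b2 Q by (simp add: algebra_simps)
      then show "of_bool (air m n (q * n + t) c) = of_bool (t = c - Q * r)"
        using remainder_part[of t c] t c b1 n_eq by auto
    qed simp
    moreover have "{\<beta>..<\<beta> + r} - (\<lambda>i. i + q' * r) ` {..<r - \<gamma>} = {\<beta>..<q' * r}"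
      using img b1 False by auto
    ultimately show "full_row_rank (\<lambda>i j. of_bool (air m n (q * n + i) j)) {r - \<gamma>..<r}
        ({\<beta>..<\<beta> + r} - (\<lambda>i. i + q' * r) ` {..<r - \<gamma>})"
      by simp
  qed (auto simp: inj_on_def)
  moreover have "{..<r - \<gamma>} \<union> {r - \<gamma>..<r} = {..<r}" by auto
  ultimately show ?thesis by simp
qed

lemma corner_in_remainder:
  assumes windows: "\<And>p. full_row_rank (air_window r r' p :: nat \<Rightarrow> nat \<Rightarrow> 'a::field) {..<r'} {..<r'}"
    and corners: "\<And>\<epsilon>'. \<epsilon>' \<le> r' \<Longrightarrow> full_row_rank (air_corner r r' \<epsilon>' :: nat \<Rightarrow> nat \<Rightarrow> 'a) {..<\<epsilon>'} {..<\<epsilon>'}"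
    and \<epsilon>: "\<epsilon> \<le> r"
  shows "full_row_rank (air_corner m n \<epsilon> :: nat \<Rightarrow> nat \<Rightarrow> 'a) {..<\<epsilon>} {..<\<epsilon>}"
proof -
  have row: "m - \<epsilon> + t = q * n + (r - \<epsilon> + t)" for t
    using \<epsilon> div_mult_mod_eq[of m n] by linarith
  have entry: "air m n (m - \<epsilon> + t) (n - \<epsilon> + j) = air r r' (r - \<epsilon> + t) (n - \<epsilon> + j - q' * r)"
    if "t < \<epsilon>" "j < \<epsilon>" "q' * r \<le> n - \<epsilon> + j" for t j
    using remainder_part[of "r - \<epsilon> + t" "n - \<epsilon> + j"] that \<epsilon> r_less_n by (auto simp: row)
  show ?thesis
  proof (cases "\<epsilon> \<le> r'")
    case True
    show ?thesis
    proof (rule full_row_rank_reindex[OF corners[OF True], where f = id and g = id])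
      fix t j assume "t \<in> {..<\<epsilon>}" "j \<in> {..<\<epsilon>}"
      moreover have "q' * r \<le> n - \<epsilon> + j" "n - \<epsilon> + j - q' * r = r' - \<epsilon> + j"
        using True n_eq by auto
      ultimately show "air_corner m n \<epsilon> t j = air_corner r r' \<epsilon> (id t) (id j)"
        using entry[of t j] by (simp add: air_corner_def)
    qed auto
  next
    case False
    obtain Q where Q: "q' = Q + 1" using q'_pos by (metis Suc_eq_plus1 gr0_implies_Suc)
    \<comment> \<open>the first \<open>\<epsilon> - r'\<close> columns lie in the last identity block\<close>
    have img: "(\<lambda>j. j + r') ` {..<\<epsilon> - r'} = {r'..<\<epsilon>}"
      using False by (simp add: lessThan_atLeast0)
    show ?thesis
    proof (rule full_row_rank_unit_cols[where Cu = "{..<\<epsilon> - r'}" and \<psi> = "\<lambda>j. j + r'"])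
      show "(\<lambda>j. j + r') ` {..<\<epsilon> - r'} \<subseteq> {..<\<epsilon>}" using img by auto
    next
      fix t c assume t: "t \<in> {..<\<epsilon>}" and c: "c \<in> {..<\<epsilon> - r'}"
      have c1: "n - \<epsilon> + c < q' * r" using c n_eq False \<epsilon> Q by (auto simp: algebra_simps)
      have "(n - \<epsilon> + c) mod r = n - \<epsilon> + c - Q * r"
        by (rule mod_eq_diff_mult) (use c n_eq Q \<epsilon> False in \<open>auto simp: algebra_simps\<close>)
      moreover have "air m n (m - \<epsilon> + t) (n - \<epsilon> + c) = (r - \<epsilon> + t = (n - \<epsilon> + c) mod r)"
        using remainder_part[of "r - \<epsilon> + t" "n - \<epsilon> + c"] t c c1 \<epsilon> r_less_n by (auto simp: row)
      moreover have "(r - \<epsilon> + t = n - \<epsilon> + c - Q * r) = (t = c + r')"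
        using n_eq Q \<epsilon> t c False by (auto simp: algebra_simps)
      ultimately show "air_corner m n \<epsilon> t c = of_bool (t = c + r')"
        by (simp add: air_corner_def)
    next
      have "full_row_rank (air_corner m n \<epsilon> :: nat \<Rightarrow> nat \<Rightarrow> 'a) {..<r'} {\<epsilon> - r'..<\<epsilon>}"
      proof (rule full_row_rank_reindex[OF windows[of "r - \<epsilon>"], where f = id and g = "\<lambda>j. j - (\<epsilon> - r')"])
        show "bij_betw (\<lambda>j. j - (\<epsilon> - r')) {\<epsilon> - r'..<\<epsilon>} {..<r'}"
          using bij_betw_diff_const[of "\<epsilon> - r'" "\<epsilon> - r'" \<epsilon>] False by (simp add: lessThan_atLeast0)
      next
        fix t j assume t: "t \<in> {..<r'}" and j: "j \<in> {\<epsilon> - r'..<\<epsilon>}"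
        have "(r - \<epsilon> + t) mod r = r - \<epsilon> + t" using t False \<epsilon> by auto
        moreover have "n - \<epsilon> + j - q' * r = j - (\<epsilon> - r')"
          using n_eq False j \<epsilon> r_le_q'r unfolding atLeastLessThan_iff by linarith
        ultimately show "air_corner m n \<epsilon> t j = air_window r r' (r - \<epsilon>) (id t) (j - (\<epsilon> - r'))"
          using entry[of t j] t j False n_eq by (auto simp: air_corner_def air_window_def)
      qed auto
      moreover have "{..<\<epsilon>} - (\<lambda>j. j + r') ` {..<\<epsilon> - r'} = {..<r'}" using img False by auto
      moreover have "{..<\<epsilon>} - {..<\<epsilon> - r'} = {\<epsilon> - r'..<\<epsilon>}" by auto
      ultimately show "full_row_rank (air_corner m n \<epsilon> :: nat \<Rightarrow> nat \<Rightarrow> 'a)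
          ({..<\<epsilon>} - (\<lambda>j. j + r') ` {..<\<epsilon> - r'})
          ({..<\<epsilon>} - {..<\<epsilon> - r'})"
        by simp
    qed (auto simp: inj_on_def)
  qed
qed

lemma corner:
  assumes remainder_corners:
      "\<And>\<epsilon>'. \<epsilon>' \<le> r \<Longrightarrow> full_row_rank (air_corner m n \<epsilon>' :: nat \<Rightarrow> nat \<Rightarrow> 'a::field) {..<\<epsilon>'} {..<\<epsilon>'}"
    and \<epsilon>: "\<epsilon> \<le> n"
  shows "full_row_rank (air_corner m n \<epsilon> :: nat \<Rightarrow> nat \<Rightarrow> 'a) {..<\<epsilon>} {..<\<epsilon>}"
proof (cases "\<epsilon> \<le> r")
  case True
  then show ?thesis by (rule remainder_corners)
next
  case False
  obtain Q where Q: "q = Q + 1" using q_pos by (metis Suc_eq_plus1 gr0_implies_Suc)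
  have "q * n = Q * n + n" using Q by simp
  with m_eq have m: "m = Q * n + n + r" by linarith
  \<comment> \<open>the first \<open>\<epsilon> - r\<close> rows lie in the last identity block\<close>
  have img: "(\<lambda>t. t + r) ` {..<\<epsilon> - r} = {r..<\<epsilon>}"
    using False by (simp add: lessThan_atLeast0)
  have "full_row_rank (air_corner m n \<epsilon> :: nat \<Rightarrow> nat \<Rightarrow> 'a) ({..<\<epsilon> - r} \<union> {\<epsilon> - r..<\<epsilon>}) {..<\<epsilon>}"
  proof (rule full_row_rank_unit_rows[where \<phi> = "\<lambda>t. t + r"])
    show "(\<lambda>t. t + r) ` {..<\<epsilon> - r} \<subseteq> {..<\<epsilon>}" using img by auto
  next
    fix t c assume t: "t \<in> {..<\<epsilon> - r}" and c: "c \<in> {..<\<epsilon>}"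
    have "m - \<epsilon> + t < q * n" using t \<epsilon> False m_eq n_le_m unfolding lessThan_iff by linarith
    moreover have "(m - \<epsilon> + t) mod n = m - \<epsilon> + t - Q * n"
      by (rule mod_eq_diff_mult) (use t \<epsilon> False m in \<open>unfold lessThan_iff, linarith+\<close>)
    moreover have "(m - \<epsilon> + t - Q * n = n - \<epsilon> + c) = (c = t + r)"
      using t c \<epsilon> False m unfolding lessThan_iff by linarith
    ultimately show "air_corner m n \<epsilon> t c = of_bool (c = t + r)"
      using identity_part[of "m - \<epsilon> + t" "n - \<epsilon> + c"] c \<epsilon> by (auto simp: air_corner_def)
  next
    have "full_row_rank (air_corner m n \<epsilon> :: nat \<Rightarrow> nat \<Rightarrow> 'a) {\<epsilon> - r..<\<epsilon>} {..<r}"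
    proof (rule full_row_rank_reindex[OF remainder_column_window[of "n - \<epsilon>"],
          where f = "\<lambda>t. t - (\<epsilon> - r)" and g = "\<lambda>j. j + (n - \<epsilon>)"])
      show "bij_betw (\<lambda>j. j + (n - \<epsilon>)) {..<r} {n - \<epsilon>..<n - \<epsilon> + r}"
        by (simp add: bij_betw_def lessThan_atLeast0 add.commute)
    next
      fix t j assume "t \<in> {\<epsilon> - r..<\<epsilon>}" "j \<in> {..<r}"
      then have "m - \<epsilon> + t = q * n + (t - (\<epsilon> - r))"
        using False \<epsilon> m_eq n_le_m unfolding atLeastLessThan_iff by linarith
      then show "air_corner m n \<epsilon> t j = of_bool (air m n (q * n + (t - (\<epsilon> - r))) (j + (n - \<epsilon>)))"
        by (simp add: air_corner_def add.commute)
    qed (use False \<epsilon> in \<open>auto simp: inj_on_def\<close>)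
    moreover have "{..<\<epsilon>} - (\<lambda>t. t + r) ` {..<\<epsilon> - r} = {..<r}" using img False by auto
    ultimately show "full_row_rank (air_corner m n \<epsilon> :: nat \<Rightarrow> nat \<Rightarrow> 'a) {\<epsilon> - r..<\<epsilon>} ({..<\<epsilon>} - (\<lambda>t. t + r) ` {..<\<epsilon> - r})"
      by simp
  qed (auto simp: inj_on_def)
  moreover have "{..<\<epsilon> - r} \<union> {\<epsilon> - r..<\<epsilon>} = {..<\<epsilon>}" by auto
  ultimately show ?thesis by simp
qed

lemma window_in_identity_part:
  assumes "p + n \<le> q * n"
  shows "full_row_rank (air_window m n p :: nat \<Rightarrow> nat \<Rightarrow> 'a::field) {..<n} {..<n}"
proof (rule full_row_rank_permutation[OF _ bij_betw_cyclic_shift[OF n_pos]])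
  fix t c assume t: "t \<in> {..<n}" and c: "c \<in> {..<n}"
  have "p + t < q * n" using t assms by auto
  moreover from this m_eq have "(p + t) mod m = p + t" by (intro mod_less) linarith
  ultimately show "air_window m n p t c = of_bool (c = (p + t) mod n)"
    using identity_part[of "p + t" c] c by (auto simp: air_window_def)
qed simp

lemma window_wrapping_around:
  assumes corners:
      "\<And>\<epsilon>. \<epsilon> \<le> r \<Longrightarrow> full_row_rank (air_corner m n \<epsilon> :: nat \<Rightarrow> nat \<Rightarrow> 'a::field) {..<\<epsilon>} {..<\<epsilon>}"
    and p: "q * n < p" "p < m"
  shows "full_row_rank (air_window m n p :: nat \<Rightarrow> nat \<Rightarrow> 'a) {..<n} {..<n}"
proof -
  define \<epsilon> where "\<epsilon> = m - p"
  have \<epsilon>: "\<epsilon> < r" using p m_eq unfolding \<epsilon>_def by linarith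
  \<comment> \<open>after the \<open>\<epsilon>\<close> remainder rows the window continues with the top identity block\<close>
  have img: "(\<lambda>t. t - \<epsilon>) ` {\<epsilon>..<n} = {..<n - \<epsilon>}"
    by (simp add: image_minus_const_atLeastLessThan_nat lessThan_atLeast0)
  have "full_row_rank (air_window m n p :: nat \<Rightarrow> nat \<Rightarrow> 'a) ({\<epsilon>..<n} \<union> {..<\<epsilon>}) {..<n}"
  proof (rule full_row_rank_unit_rows[where \<phi> = "\<lambda>t. t - \<epsilon>"])
    show "(\<lambda>t. t - \<epsilon>) ` {\<epsilon>..<n} \<subseteq> {..<n}" using img by auto
  next
    fix t c assume t: "t \<in> {\<epsilon>..<n}" and c: "c \<in> {..<n}"
    have "(p + t) mod m = p + t - m" by (rule mod_eq_diff_mult[of 1, simplified]) (use t p n_le_m in \<open>auto simp: \<epsilon>_def\<close>)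
    also have "\<dots> = t - \<epsilon>" using t p by (auto simp: \<epsilon>_def)
    finally have e: "(p + t) mod m = t - \<epsilon>" .
    have "t - \<epsilon> < q * n" using t q_pos by (auto intro: less_le_trans[of _ n] simp: mult_le_mono1)
    then show "air_window m n p t c = of_bool (c = t - \<epsilon>)"
      using identity_part[of "t - \<epsilon>" c] e c t by (auto simp: air_window_def)
  next
    have "full_row_rank (air_window m n p :: nat \<Rightarrow> nat \<Rightarrow> 'a) {..<\<epsilon>} {n - \<epsilon>..<n}"
    proof (rule full_row_rank_reindex[OF corners[of \<epsilon>], where f = id and g = "\<lambda>j. j - (n - \<epsilon>)"])
      show "bij_betw (\<lambda>j. j - (n - \<epsilon>)) {n - \<epsilon>..<n} {..<\<epsilon>}"
        using bij_betw_diff_const[of "n - \<epsilon>" "n - \<epsilon>" n] \<epsilon> r_less_n by (simp add: lessThan_atLeast0)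
    next
      fix t j assume "t \<in> {..<\<epsilon>}" "j \<in> {n - \<epsilon>..<n}"
      moreover from this have "(p + t) mod m = m - \<epsilon> + id t" using p by (auto simp: \<epsilon>_def)
      ultimately show "air_window m n p t j = air_corner m n \<epsilon> (id t) (j - (n - \<epsilon>))"
        by (auto simp: air_window_def air_corner_def)
    qed (use \<epsilon> in auto)
    moreover have "{..<n} - (\<lambda>t. t - \<epsilon>) ` {\<epsilon>..<n} = {n - \<epsilon>..<n}" using img by auto
    ultimately show "full_row_rank (air_window m n p :: nat \<Rightarrow> nat \<Rightarrow> 'a) {..<\<epsilon>} ({..<n} - (\<lambda>t. t - \<epsilon>) ` {\<epsilon>..<n})"
      by simp
  qed (auto simp: inj_on_def)
  moreover have "{\<epsilon>..<n} \<union> {..<\<epsilon>} = {..<n}" using \<epsilon> r_less_n by auto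
  ultimately show ?thesis by simp
qed

lemma window_tail_through_remainder:
  assumes p: "p \<le> q * n" and wrap: "m \<le> p + n"
  shows "full_row_rank (air_window m n p :: nat \<Rightarrow> nat \<Rightarrow> 'a::field) {q * n - p..<n} {..<n - (q * n - p)}"
proof -
  define \<alpha> where "\<alpha> = q * n - p"
  have row: "p + t = q * n + (t - \<alpha>)" if "\<alpha> \<le> t" for t
    using that p by (simp add: \<alpha>_def)
  have \<alpha>r: "\<alpha> + r \<le> n" using wrap p m_eq unfolding \<alpha>_def by linarith
  have img: "(\<lambda>t. t - (\<alpha> + r)) ` {\<alpha> + r..<n} = {..<n - \<alpha> - r}"
    by (simp add: image_minus_const_atLeastLessThan_nat lessThan_atLeast0)
  have "full_row_rank (air_window m n p :: nat \<Rightarrow> nat \<Rightarrow> 'a) ({\<alpha> + r..<n} \<union> {\<alpha>..<\<alpha> + r}) {..<n - \<alpha>}"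
  proof (rule full_row_rank_unit_rows[where \<phi> = "\<lambda>t. t - (\<alpha> + r)"])
    show "(\<lambda>t. t - (\<alpha> + r)) ` {\<alpha> + r..<n} \<subseteq> {..<n - \<alpha>}" using img by auto
  next
    fix t c assume t: "t \<in> {\<alpha> + r..<n}" and c: "c \<in> {..<n - \<alpha>}"
    have "m \<le> p + t" "p + t < m + m" using t p m_eq n_le_m unfolding \<alpha>_def atLeastLessThan_iff by linarith+
    then have "(p + t) mod m = p + t - m" using mod_eq_diff_mult[of 1 m "p + t"] by simp
    also have "\<dots> = t - (\<alpha> + r)" using t p m_eq unfolding \<alpha>_def atLeastLessThan_iff by linarith
    finally have e: "(p + t) mod m = t - (\<alpha> + r)" .
    have "t - (\<alpha> + r) < q * n" using t q_pos by (auto intro: less_le_trans[of _ n] simp: mult_le_mono1)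
    then show "air_window m n p t c = of_bool (c = t - (\<alpha> + r))"
      using identity_part[of "t - (\<alpha> + r)" c] e c t by (auto simp: air_window_def)
  next
    have "full_row_rank (air_window m n p :: nat \<Rightarrow> nat \<Rightarrow> 'a) {\<alpha>..<\<alpha> + r} {n - \<alpha> - r..<n - \<alpha> - r + r}"
    proof (rule full_row_rank_reindex[OF remainder_column_window[of "n - \<alpha> - r"], where f = "\<lambda>t. t - \<alpha>" and g = id])
      fix t j assume "t \<in> {\<alpha>..<\<alpha> + r}"
      then have "p + t = q * n + (t - \<alpha>)" "t - \<alpha> < r" using row by auto
      moreover from this have "p + t < m" using m_eq by linarith
      ultimately show "air_window m n p t j = of_bool (air m n (q * n + (t - \<alpha>)) (id j))"
        by (auto simp: air_window_def row)
    qed (use \<alpha>r in \<open>auto simp: inj_on_def\<close>)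
    moreover have "{..<n - \<alpha>} - (\<lambda>t. t - (\<alpha> + r)) ` {\<alpha> + r..<n} = {n - \<alpha> - r..<n - \<alpha> - r + r}"
      using img \<alpha>r by auto
    ultimately show "full_row_rank (air_window m n p :: nat \<Rightarrow> nat \<Rightarrow> 'a) {\<alpha>..<\<alpha> + r}
        ({..<n - \<alpha>} - (\<lambda>t. t - (\<alpha> + r)) ` {\<alpha> + r..<n})"
      by simp
  qed (auto simp: inj_on_def)
  moreover have "{\<alpha> + r..<n} \<union> {\<alpha>..<\<alpha> + r} = {\<alpha>..<n}" using \<alpha>r by auto
  ultimately show ?thesis by (simp add: \<alpha>_def)
qed

lemma window_tail_inside_remainder:
  assumes p: "p \<le> q * n" and inside: "p + n < m"
  shows "full_row_rank (air_window m n p :: nat \<Rightarrow> nat \<Rightarrow> 'a::field) {q * n - p..<n} {..<n - (q * n - p)}"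
proof -
  define \<alpha> where "\<alpha> = q * n - p"
  have row: "p + t = q * n + (t - \<alpha>)" if "\<alpha> \<le> t" for t
    using that p by (simp add: \<alpha>_def)
  show ?thesis unfolding \<alpha>_def[symmetric]
  proof (rule full_row_rank_permutation[where \<phi> = "\<lambda>t. t - \<alpha>"])
    show "bij_betw (\<lambda>t. t - \<alpha>) {\<alpha>..<n} {..<n - \<alpha>}"
      using bij_betw_diff_const[of \<alpha> \<alpha> n] by (simp add: lessThan_atLeast0)
  next
    fix t c assume t: "t \<in> {\<alpha>..<n}" and c: "c \<in> {..<n - \<alpha>}"
    have tr: "t - \<alpha> < r" and cr: "c < r"
      using t c inside m_eq p unfolding \<alpha>_def atLeastLessThan_iff lessThan_iff by linarith+
    have "p + t < m" using t inside p unfolding \<alpha>_def atLeastLessThan_iff by linarith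
    then have e: "(p + t) mod m = q * n + (t - \<alpha>)" using t by (simp add: row)
    have "c < q' * r" using cr r_le_q'r by linarith
    then show "air_window m n p t c = of_bool (c = t - \<alpha>)"
      using remainder_part[of "t - \<alpha>" c] e tr cr c r_less_n by (auto simp: air_window_def)
  qed simp
qed

lemma window_entering_remainder:
  assumes p: "p \<le> q * n" "q * n < p + n"
  shows "full_row_rank (air_window m n p :: nat \<Rightarrow> nat \<Rightarrow> 'a::field) {..<n} {..<n}"
proof -
  define \<alpha> where "\<alpha> = q * n - p"
  obtain Q where Q: "q = Q + 1" using q_pos by (metis Suc_eq_plus1 gr0_implies_Suc)
  have \<alpha>: "\<alpha> < n" using p by (simp add: \<alpha>_def)
  have "q * n = Q * n + n" using Q by simp
  then have pQ: "Q * n \<le> p" using p by linarith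
  have img: "(\<lambda>t. t + (n - \<alpha>)) ` {..<\<alpha>} = {n - \<alpha>..<n}"
    using image_add_atLeastLessThan'[of "n - \<alpha>" 0 \<alpha>] \<alpha> by (simp add: lessThan_atLeast0)
  have "full_row_rank (air_window m n p :: nat \<Rightarrow> nat \<Rightarrow> 'a) ({..<\<alpha>} \<union> {\<alpha>..<n}) {..<n}"
  proof (rule full_row_rank_unit_rows[where \<phi> = "\<lambda>t. t + (n - \<alpha>)"])
    show "(\<lambda>t. t + (n - \<alpha>)) ` {..<\<alpha>} \<subseteq> {..<n}" using img by auto
  next
    fix t c assume t: "t \<in> {..<\<alpha>}" and c: "c \<in> {..<n}"
    have pt: "p + t < q * n" using t by (auto simp: \<alpha>_def)
    then have e: "(p + t) mod m = p + t" using m_eq by (intro mod_less) linarith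
    have "(p + t) mod n = p + t - Q * n"
      by (rule mod_eq_diff_mult) (use pt pQ \<open>q * n = Q * n + n\<close> in linarith)+
    also have "\<dots> = t + (n - \<alpha>)" using pQ \<open>q * n = Q * n + n\<close> \<alpha> t p by (auto simp: \<alpha>_def)
    finally show "air_window m n p t c = of_bool (c = t + (n - \<alpha>))"
      using identity_part[of "p + t" c] e c pt by (auto simp: air_window_def)
  next
    show "full_row_rank (air_window m n p :: nat \<Rightarrow> nat \<Rightarrow> 'a) {\<alpha>..<n} ({..<n} - (\<lambda>t. t + (n - \<alpha>)) ` {..<\<alpha>})"
    proof -
      have "{..<n} - (\<lambda>t. t + (n - \<alpha>)) ` {..<\<alpha>} = {..<n - \<alpha>}" using img by auto
      moreover have "full_row_rank (air_window m n p :: nat \<Rightarrow> nat \<Rightarrow> 'a) {\<alpha>..<n} {..<n - \<alpha>}"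
        using window_tail_through_remainder[OF p(1)] window_tail_inside_remainder[OF p(1)]
        by (cases "m \<le> p + n") (auto simp: \<alpha>_def)
      ultimately show ?thesis by simp
    qed
  qed (auto simp: inj_on_def)
  moreover have "{..<\<alpha>} \<union> {\<alpha>..<n} = {..<n}" using \<alpha> by auto
  ultimately show ?thesis by simp
qed

lemma window:
  assumes corners:
      "\<And>\<epsilon>. \<epsilon> \<le> r \<Longrightarrow> full_row_rank (air_corner m n \<epsilon> :: nat \<Rightarrow> nat \<Rightarrow> 'a::field) {..<\<epsilon>} {..<\<epsilon>}"
  shows "full_row_rank (air_window m n p :: nat \<Rightarrow> nat \<Rightarrow> 'a) {..<n} {..<n}"
proof -
  have "p mod m < m" using n_pos n_le_m by simp
  then consider "p mod m + n \<le> q * n" | "q * n < p mod m" "p mod m < m"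
    | "p mod m \<le> q * n" "q * n < p mod m + n"
    by linarith
  then have "full_row_rank (air_window m n (p mod m) :: nat \<Rightarrow> nat \<Rightarrow> 'a) {..<n} {..<n}"
    by cases (use window_in_identity_part window_wrapping_around[OF corners] window_entering_remainder in auto)
  then show ?thesis by (simp add: air_window_mod)
qed

end

text \<open>The corner statement strengthens the induction hypothesis: the recursive block
  of the AIR matrix sits in the bottom right corner.\<close>

lemma air_full_rank:
  "n \<le> m \<Longrightarrow>
    (\<forall>p. full_row_rank (air_window m n p :: nat \<Rightarrow> nat \<Rightarrow> 'a::field) {..<n} {..<n}) \<and>
    (\<forall>\<epsilon>\<le>n. full_row_rank (air_corner m n \<epsilon> :: nat \<Rightarrow> nat \<Rightarrow> 'a) {..<\<epsilon>} {..<\<epsilon>})"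
proof (induction n arbitrary: m rule: less_induct)
  case (less n)
  consider "n = 0" | "0 < n" "m mod n = 0" | "0 < n" "0 < m mod n" by auto
  then show ?case
  proof cases
    case 1
    then show ?thesis by (simp add: full_row_rank_empty)
  next
    case 2
    then show ?thesis
      using air_window_full_rank_dvd[OF 2(1) less.prems 2(2)] air_corner_full_rank_dvd[OF 2(1) less.prems 2(2)]
      by blast
  next
    case 3
    then interpret air_step m n using less.prems by unfold_locales
    have "r' < n" using r'_less_r r_less_n by linarith
    from less.IH[OF this, of r] have IH:
      "\<And>p. full_row_rank (air_window r r' p :: nat \<Rightarrow> nat \<Rightarrow> 'a) {..<r'} {..<r'}"
      "\<And>\<epsilon>. \<epsilon> \<le> r' \<Longrightarrow> full_row_rank (air_corner r r' \<epsilon> :: nat \<Rightarrow> nat \<Rightarrow> 'a) {..<\<epsilon>} {..<\<epsilon>}"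
      using r'_less_r by auto
    have "\<And>\<epsilon>. \<epsilon> \<le> r \<Longrightarrow> full_row_rank (air_corner m n \<epsilon> :: nat \<Rightarrow> nat \<Rightarrow> 'a) {..<\<epsilon>} {..<\<epsilon>}"
      by (rule corner_in_remainder[OF IH])
    then show ?thesis using window corner by blast
  qed
qed

corollary air_window_full_rank:
  "n \<le> m \<Longrightarrow> full_row_rank (air_window m n p :: nat \<Rightarrow> nat \<Rightarrow> 'a::field) {..<n} {..<n}"
  using air_full_rank by blast

section \<open>Decoding\<close>

lemma codeword_diff:
  "codeword K D U x j - codeword K D U y j = codeword K D U (\<lambda>k i. x k i - y k i) j"
  unfolding codeword_def by (simp add: sum_subtractf left_diff_distrib)

lemma not_in_side_info_self:
  assumes "k < K" "U < K" "D < K"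
  shows "k \<notin> side_info K D U k"
proof
  assume "k \<in> side_info K D U k"
  then obtain t where t: "1 \<le> t" "t < K" "(k + (K - t)) mod K = k \<or> (k + t) mod K = k"
    unfolding side_info_def using assms by auto
  have "(k + s) mod K \<noteq> k" if "1 \<le> s" "s < K" for s
  proof (cases "k + s < K")
    case False
    then have "(k + s) mod K = k + s - K" using mod_eq_diff_mult[of 1 K "k + s"] assms that by simp
    then show ?thesis using that False by linarith
  qed (use that in simp)
  moreover have "1 \<le> K - t" "K - t < K" using t by auto
  ultimately show False using t by blast
qed

lemma offset_not_in_side_info:
  assumes k: "k < K" and k': "k' < K" and side: "k' \<notin> side_info K D U k"
  defines "d \<equiv> (k' + K - k) mod K"
  shows "(k + d) mod K = k'" and "d = 0 \<or> D < d \<and> d < K - U"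
proof -
  show kd: "(k + d) mod K = k'"
  proof -
    have "(k + d) mod K = (k + (k' + K - k)) mod K" by (simp add: d_def mod_add_right_eq)
    also have "k + (k' + K - k) = k' + K" using k by simp
    finally show ?thesis using k' by simp
  qed
  have dK: "d < K" using k by (simp add: d_def)
  show "d = 0 \<or> D < d \<and> d < K - U"
  proof (rule ccontr)
    assume "\<not> ?thesis"
    then have "(1 \<le> d \<and> d \<le> D) \<or> (K - U \<le> d \<and> 1 \<le> K - d \<and> K - d \<le> U)" using dK by auto
    moreover have "k + K - (K - d) = k + d" using dK by simp
    ultimately have "k' \<in> side_info K D U k" using kd unfolding side_info_def by (metis (mono_tags, lifting) UnCI mem_Collect_eq)
    with side show False ..
  qed
qed

locale two_sided_problem =
  fixes K D U :: nat
  assumes U_le_D: "U \<le> D" and K_large: "U + D + 2 \<le> K"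
begin

abbreviation a where "a \<equiv> ic_a K D U"
abbreviation ua where "ua \<equiv> ic_ua K D U"
abbreviation Da where "Da \<equiv> ic_Da K D U"
abbreviation Ka where "Ka \<equiv> ic_Ka K D U"
abbreviation N where "N \<equiv> ic_N K D U"

lemma a_pos: "0 < a"
  using K_large by (simp add: ic_a_def)

lemma K_eq: "K = a * Ka"
  by (simp add: ic_Ka_def ic_a_def)

lemma D_minus_U_eq: "D - U = a * Da"
proof -
  have "a dvd D - U" unfolding ic_a_def by (meson dvd_trans gcd_dvd1 gcd_dvd2)
  then show ?thesis by (simp add: ic_Da_def)
qed

lemma U_eq: "U + 1 = a * ua"
proof -
  have "a dvd U + 1" unfolding ic_a_def by (meson dvd_trans gcd_dvd2)
  then show ?thesis by (simp add: ic_ua_def)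
qed

lemma D_eq: "D + 1 = a * (Da + ua)"
  using D_minus_U_eq U_eq U_le_D by (simp add: algebra_simps)

lemma Da_ua_less_Ka: "Da + ua < Ka"
proof -
  have "a * (Da + ua) < a * Ka" using D_eq K_eq K_large by linarith
  then show ?thesis by simp
qed

lemma ua_pos: "0 < ua"
  using U_eq by (cases ua) auto

lemma N_eq: "N = Ka - Da"
  by (simp add: ic_N_def)

lemma a_N_eq: "a * N = K - D + U"
  using K_eq D_minus_U_eq U_le_D K_large by (simp add: N_eq diff_mult_distrib2)

lemma rate: "real ua / real N = real (U + 1) / real (K - D + U)"
proof -
  have "real (U + 1) / real (K - D + U) = real (a * ua) / real (a * N)"
    by (simp only: U_eq a_N_eq)
  also have "\<dots> = real ua / real N" using a_pos by simp
  finally show ?thesis ..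
qed

lemma L2s_eq: "L2s K D U r j = air Ka N ((r div ua div a + r mod ua) mod Ka) j"
proof -
  have "r div (a * ua) = r div ua div a" by (metis div_mult2_eq mult.commute)
  moreover have "r mod (a * ua) mod ua = r mod ua" by (simp add: mod_mod_cancel)
  ultimately show ?thesis by (simp add: L2s_def Let_def)
qed

lemma shift_bounds:
  assumes "D < d" "d < K - U" "c < a"
  shows "Da + ua \<le> (c + d) div a" and "(c + d) div a \<le> Ka - ua"
proof -
  have "(Da + ua) * a \<le> c + d" using D_eq assms(1) by (simp add: mult.commute)
  then show "Da + ua \<le> (c + d) div a" using a_pos by (simp add: less_eq_div_iff_mult_less_eq)
  have "K - U = a * (Ka - ua) + 1"
    using K_eq U_eq K_large Da_ua_less_Ka by (simp add: diff_mult_distrib2)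
  then have "c + d < (Ka - ua + 1) * a" using assms(2,3) by (simp add: algebra_simps)
  then have "(c + d) div a < Ka - ua + 1" by (rule less_mult_imp_div_less)
  then show "(c + d) div a \<le> Ka - ua" by simp
qed

lemma window_position:
  assumes k: "k < K" and k': "k' < K" and side: "k' \<notin> side_info K D U k"
    and i: "i < ua" and i': "i' < ua"
  shows "\<exists>t<N. (k div a + ua + Da + t) mod Ka = (k' div a + i') mod Ka
    \<and> (t = N - ua + i \<longleftrightarrow> k' = k \<and> i' = i)"
proof -
  define d where "d = (k' + K - k) mod K"
  note offset = offset_not_in_side_info[OF k k' side, folded d_def]
  show ?thesis
  proof (cases "d = 0")
    case True
    then have "k' = k" using offset(1) k by simp
    moreover have "(k div a + ua + Da + (N - ua + i')) mod Ka = (k div a + i') mod Ka"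
    proof -
      have "k div a + ua + Da + (N - ua + i') = (k div a + i') + Ka"
        using Da_ua_less_Ka by (simp add: N_eq)
      then show ?thesis by (simp only: mod_add_self2)
    qed
    ultimately show ?thesis using i' Da_ua_less_Ka by (intro exI[of _ "N - ua + i'"]) (auto simp: N_eq)
  next
    case False
    with offset(2) have d: "D < d" "d < K - U" by auto
    have "k' \<noteq> k" using False k by (auto simp: d_def)
    define e where "e = (k mod a + d) div a"
    note e = shift_bounds[OF d mod_less_divisor[OF a_pos], of k, folded e_def]
    have "(k + d) div a = k div a + e"
      using a_pos by (simp add: e_def div_add1_eq[of k d a] div_add1_eq[of "k mod a" d a])
    moreover have "k' div a = (k + d) div a mod Ka"
    proof -
      have "k' div a = (k + d) mod (a * Ka) div a" using offset(1) K_eq by simp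
      also have "\<dots> = (a * ((k + d) div a mod Ka) + (k + d) mod a) div a" by (simp only: mod_mult2_eq)
      also have "\<dots> = (k + d) div a mod Ka" using a_pos by simp
      finally show ?thesis .
    qed
    ultimately have pos: "(k div a + ua + Da + (e - (Da + ua) + i')) mod Ka = (k' div a + i') mod Ka"
      using e(1) by (simp add: mod_add_left_eq add.assoc)
    have "e - (Da + ua) + i' < N - ua" using e i' Da_ua_less_Ka by (simp add: N_eq)
    then have "e - (Da + ua) + i' < N" and "e - (Da + ua) + i' \<noteq> N - ua + i" by linarith+
    with pos \<open>k' \<noteq> k\<close> show ?thesis by (intro exI[of _ "e - (Da + ua) + i'"]) simp
  qed
qed

lemma codeword_combination:
  "(\<Sum>j<N. w j * codeword K D U z j) =
    (\<Sum>\<rho><K * ua. z (\<rho> div ua) (\<rho> mod ua) *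
      (\<Sum>c<N. of_bool (air Ka N ((\<rho> div ua div a + \<rho> mod ua) mod Ka) c) * w c))"
proof -
  have "(\<Sum>j<N. w j * codeword K D U z j) =
      (\<Sum>j<N. \<Sum>\<rho><K * ua. w j * (z (\<rho> div ua) (\<rho> mod ua) * of_bool (L2s K D U \<rho> j)))"
    unfolding codeword_def by (simp only: sum_distrib_left)
  also have "\<dots> = (\<Sum>\<rho><K * ua. \<Sum>j<N. w j * (z (\<rho> div ua) (\<rho> mod ua) * of_bool (L2s K D U \<rho> j)))"
    by (rule sum.swap)
  also have "\<dots> = (\<Sum>\<rho><K * ua. z (\<rho> div ua) (\<rho> mod ua) *
      (\<Sum>c<N. of_bool (air Ka N ((\<rho> div ua div a + \<rho> mod ua) mod Ka) c) * w c))"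
    unfolding L2s_eq sum_distrib_left
    by (intro sum.cong refl) (simp add: mult.commute mult.left_commute)
  finally show ?thesis .
qed

lemma symbol_coefficient:
  fixes w :: "nat \<Rightarrow> 'a::field"
  assumes k: "k < K" and i: "i < ua" and \<rho>: "\<rho> < K * ua"
    and w: "\<And>t. t < N \<Longrightarrow>
      (\<Sum>c<N. of_bool (air Ka N ((k div a + ua + Da + t) mod Ka) c) * w c) = of_bool (t = N - ua + i)"
    and side_zero: "\<And>k' i'. k' \<in> side_info K D U k \<Longrightarrow> i' < ua \<Longrightarrow> z k' i' = 0"
  shows "z (\<rho> div ua) (\<rho> mod ua) * (\<Sum>c<N. of_bool (air Ka N ((\<rho> div ua div a + \<rho> mod ua) mod Ka) c) * w c) =
    (if \<rho> = k * ua + i then z k i else 0)"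
proof -
  define k' where "k' = \<rho> div ua"
  define i' where "i' = \<rho> mod ua"
  have k': "k' < K" and i': "i' < ua"
    using \<rho> ua_pos by (simp_all add: k'_def i'_def div_less_iff_less_mult)
  have target: "\<rho> = k * ua + i \<longleftrightarrow> k' = k \<and> i' = i"
    using i i' by (auto simp: k'_def i'_def)
  show ?thesis
  proof (cases "k' \<in> side_info K D U k")
    case True
    moreover have "k' \<noteq> k" using True not_in_side_info_self[OF k] K_large by auto
    ultimately show ?thesis using side_zero i' target by (auto simp: k'_def i'_def)
  next
    case False
    then obtain t where "t < N" "(k div a + ua + Da + t) mod Ka = (k' div a + i') mod Ka"
      "t = N - ua + i \<longleftrightarrow> k' = k \<and> i' = i"
      using window_position[OF k k' False i i'] by blast
    then show ?thesis using w[of t] target by (simp add: k'_def i'_def)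
  qed
qed

lemma decoding:
  fixes z :: "nat \<Rightarrow> nat \<Rightarrow> 'a::field"
  assumes k: "k < K" and i: "i < ua"
    and codeword_zero: "\<And>j. j < N \<Longrightarrow> codeword K D U z j = 0"
    and side_zero: "\<And>k' i'. k' \<in> side_info K D U k \<Longrightarrow> i' < ua \<Longrightarrow> z k' i' = 0"
  shows "z k i = 0"
proof -
  have "full_row_rank (air_window Ka N (k div a + ua + Da) :: nat \<Rightarrow> nat \<Rightarrow> 'a) {..<N} {..<N}"
    by (rule air_window_full_rank) (simp add: N_eq)
  \<comment> \<open>weights on the broadcast symbols that isolate row \<open>N - ua + i\<close> of the window\<close>
  from spec[OF this[unfolded full_row_rank_def], of "\<lambda>t. of_bool (t = N - ua + i)"]
  obtain w :: "nat \<Rightarrow> 'a" where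
    "\<forall>t\<in>{..<N}. (\<Sum>c\<in>{..<N}. air_window Ka N (k div a + ua + Da) t c * w c) = of_bool (t = N - ua + i)"
    by blast
  then have "(\<Sum>c<N. of_bool (air Ka N ((k div a + ua + Da + t) mod Ka) c) * w c) = of_bool (t = N - ua + i)"
    if "t < N" for t
    using that by (simp add: air_window_def)
  note coefficient = symbol_coefficient[OF k i _ this side_zero]
  have "0 = (\<Sum>j<N. w j * codeword K D U z j)" using codeword_zero by simp
  also have "\<dots> = (\<Sum>\<rho><K * ua. if \<rho> = k * ua + i then z k i else 0)"
    unfolding codeword_combination by (rule sum.cong[OF refl], rule coefficient) simp
  also have "\<dots> = z k i"
  proof -
    have "k * ua + i < (k + 1) * ua" using i by simp
    also have "\<dots> \<le> K * ua" using k by (intro mult_le_mono1) simp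
    finally show ?thesis by simp
  qed
  finally show ?thesis ..
qed

end

theorem lemma2:
  fixes K D U :: nat
  assumes "U \<le> D" and "U + D + 2 \<le> K"
  shows "(\<forall>k<K. \<forall>x y :: nat \<Rightarrow> nat \<Rightarrow> 'a::{finite,field}.
            (\<forall>j<ic_N K D U. codeword K D U x j = codeword K D U y j) \<and>
            (\<forall>k'\<in>side_info K D U k. \<forall>i<ic_ua K D U. x k' i = y k' i)
            \<longrightarrow> (\<forall>i<ic_ua K D U. x k i = y k i))
         \<and> real (ic_ua K D U) / real (ic_N K D U) = real (U + 1) / real (K - D + U)"
proof -
  interpret two_sided_problem K D U
    using assms by unfold_locales
  show ?thesis
  proof (intro conjI allI impI rate)
    fix k i and x y :: "nat \<Rightarrow> nat \<Rightarrow> 'a"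
    assume k: "k < K" and i: "i < ua"
      and known: "(\<forall>j<N. codeword K D U x j = codeword K D U y j) \<and>
        (\<forall>k'\<in>side_info K D U k. \<forall>i<ua. x k' i = y k' i)"
    have "x k i - y k i = 0"
    proof (rule decoding[OF k i, of "\<lambda>k i. x k i - y k i"])
      show "codeword K D U (\<lambda>k i. x k i - y k i) j = 0" if "j < N" for j
        using known that codeword_diff[of K D U x j y] by simp
    qed (use known in simp)
    then show "x k i = y k i" by simp
  qed
qed

end
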